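(* Let $f(w)=\frac1N\sum_{i=1}^N f_i(w)$ be a $\mu$-strongly convex function on $\mathbb{R}^d$ (i.e. $(x-y)^T(\nabla f(x)-\nabla f(y))\ge \mu\|x-y\|^2$ for all $x,y$) whose component gradients $\nabla f_i$ are all $L$-Lipschitz continuous, and let $w^*$ be its global minimizer. Let $(\delta,b)$ be a low-precision representation such that every coordinate of $w^*$ satisfies $-\delta\cdot 2^{b-1}\le (w^* )_j\le \delta\cdot(2^{b-1}-1)$. Then for any $w\in\mathbb{R}^d$, \[ \mathbb{E}\left[\|Q_{(\delta,b)}(w)-w^*\|^2\right]\le \|w-w^*\|^2+\frac{d\delta^2}{4}. \]
   Context: A low-precision representation is a pair $(\delta,b)$ with scale factor $\delta>0$ and number of bits $b\in\mathbb{N}$; the representable numbers are $\mathrm{dom}(\delta,b)=\{-\delta 2^{b-1},\dots,-\delta,0,\delta,\dots,\delta(2^{b-1}-1)\}$. The quantization function $Q_{(\delta,b)}$ acts on vectors componentwise and independently: for a scalar $x$ in the interval $[-\delta 2^{b-1},\delta(2^{b-1}-1)]$, letting $z$ be the largest element of $\mathrm{dom}(\delta,b)$ with $z\le x$, $Q_{(\delta,b)}(x)$ equals $z+\delta$ with probability $(x-z)/\delta$ and $z$ otherwise (so $\mathbb{E}[Q_{(\delta,b)}(x)]=x$); for $x$ outside that interval, $Q_{(\delta,b)}(x)$ is the closest element of $\mathrm{dom}(\delta,b)$ (the largest or smallest representable value). The expectation is over the randomness of the quantization. *)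

theory Defs
  imports "HOL-Analysis.Analysis" "HOL-Probability.Probability"
begin

definition lp_lo :: "real \<Rightarrow> nat \<Rightarrow> real" where
  "lp_lo \<delta> b = - \<delta> * 2 ^ (b - 1)"

definition lp_hi :: "real \<Rightarrow> nat \<Rightarrow> real" where
  "lp_hi \<delta> b = \<delta> * (2 ^ (b - 1) - 1)"

definition lp_dom :: "real \<Rightarrow> nat \<Rightarrow> real set" where
  "lp_dom \<delta> b = {\<delta> * of_int k | k. - (2 ^ (b - 1)) \<le> k \<and> k \<le> 2 ^ (b - 1) - 1}"

definition quant_scalar :: "real \<Rightarrow> nat \<Rightarrow> real \<Rightarrow> real pmf" where
  "quant_scalar \<delta> b x =
     (if lp_lo \<delta> b \<le> x \<and> x \<le> lp_hi \<delta> b then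
        (let z = Max {y \<in> lp_dom \<delta> b. y \<le> x} in
          map_pmf (\<lambda>c. if c then z + \<delta> else z) (bernoulli_pmf ((x - z) / \<delta>)))
      else if x < lp_lo \<delta> b then return_pmf (lp_lo \<delta> b)
      else return_pmf (lp_hi \<delta> b))"

definition quant :: "real \<Rightarrow> nat \<Rightarrow> real ^ 'n \<Rightarrow> (real ^ 'n) pmf" where
  "quant \<delta> b w = map_pmf vec_lambda (Pi_pmf UNIV 0 (\<lambda>j. quant_scalar \<delta> b (w $ j)))"

end

theory Submission imports Defs begin

text \<open>Each coordinate is rounded to one of its two neighbouring grid points, up with
  probability equal to the relative distance; the mean is preserved, so the squared error
  increases by the variance (x - z)(z + \<delta> - x) \<le> \<delta>^2/4 of the rounding. Clamping an
  out-of-range coordinate only moves it towards the range containing w*. Summing over the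
  independent coordinates gives the bound.\<close>

lemma finite_lp_dom: "finite (lp_dom \<delta> b)"
proof -
  have "lp_dom \<delta> b = (\<lambda>k. \<delta> * of_int k) ` {- (2 ^ (b - 1)) .. 2 ^ (b - 1) - 1}"
    unfolding lp_dom_def by auto
  thus ?thesis by simp
qed

lemma lp_lo_in_lp_dom: "lp_lo \<delta> b \<in> lp_dom \<delta> b"
  unfolding lp_dom_def lp_lo_def by (rule CollectI, rule exI[of _ "- (2 ^ (b - 1))"]) simp

lemma lp_floor_gap:
  assumes "\<delta> > 0" and "lp_lo \<delta> b \<le> x" "x \<le> lp_hi \<delta> b"
  defines "z \<equiv> Max {y \<in> lp_dom \<delta> b. y \<le> x}"
  shows "z \<le> x" and "x - z \<le> \<delta>"
proof -
  let ?S = "{y \<in> lp_dom \<delta> b. y \<le> x}"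
  have fin: "finite ?S" using finite_lp_dom by simp
  have "?S \<noteq> {}" using lp_lo_in_lp_dom assms(2) by blast
  hence "z \<in> ?S" unfolding z_def using fin by (rule Max_in[rotated])
  then obtain k :: int where zk: "z = \<delta> * of_int k" and k_lo: "- (2 ^ (b - 1)) \<le> k"
    and "z \<le> x" unfolding lp_dom_def by auto
  thus "z \<le> x" by simp
  show "x - z \<le> \<delta>"
  proof (rule ccontr)
    assume "\<not> x - z \<le> \<delta>"
    hence up: "z + \<delta> < x" by simp
    have "\<delta> * of_int (k + 1) < \<delta> * (2 ^ (b - 1) - 1)"
      using up assms(3) zk unfolding lp_hi_def by (simp add: algebra_simps)
    hence "real_of_int (k + 1) < real_of_int (2 ^ (b - 1) - 1)" using assms(1) by simp
    hence "k + 1 \<le> 2 ^ (b - 1) - 1" by (simp only: of_int_less_iff)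
    hence "z + \<delta> \<in> ?S" unfolding lp_dom_def using up zk k_lo
      by (auto intro!: exI[of _ "k + 1"] simp: algebra_simps)
    hence "z + \<delta> \<le> z" unfolding z_def using fin Max_ge by blast
    thus False using assms(1) by simp
  qed
qed

lemma expectation_sq_error_stochastic_rounding:
  fixes z x s \<delta> :: real
  assumes "\<delta> > 0" and "z \<le> x" and "x - z \<le> \<delta>"
  shows "measure_pmf.expectation
           (map_pmf (\<lambda>c. if c then z + \<delta> else z) (bernoulli_pmf ((x - z) / \<delta>))) (\<lambda>y. (y - s)\<^sup>2)
         \<le> (x - s)\<^sup>2 + \<delta>\<^sup>2 / 4"
proof -
  define p where "p = (x - z) / \<delta>"
  have "0 \<le> p" "p \<le> 1" unfolding p_def using assms by auto
  hence "measure_pmf.expectation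
           (map_pmf (\<lambda>c. if c then z + \<delta> else z) (bernoulli_pmf p)) (\<lambda>y. (y - s)\<^sup>2)
      = (z + \<delta> - s)\<^sup>2 * p + (z - s)\<^sup>2 * (1 - p)" by simp
  also have "\<dots> = (x - s)\<^sup>2 + (x - z) * (z + \<delta> - x)"
    unfolding p_def using assms(1) by (simp add: field_simps power2_eq_square)
  also have "\<dots> \<le> (x - s)\<^sup>2 + \<delta>\<^sup>2 / 4"
  proof -
    have "0 \<le> (2 * x - 2 * z - \<delta>)\<^sup>2" by simp
    thus ?thesis by (simp add: power2_eq_square algebra_simps)
  qed
  finally show ?thesis unfolding p_def .
qed

lemma expectation_sq_error_quant_scalar:
  assumes "\<delta> > 0" and "lp_lo \<delta> b \<le> s" "s \<le> lp_hi \<delta> b"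
  shows "measure_pmf.expectation (quant_scalar \<delta> b x) (\<lambda>y. (y - s)\<^sup>2) \<le> (x - s)\<^sup>2 + \<delta>\<^sup>2 / 4"
proof -
  consider (inside) "lp_lo \<delta> b \<le> x \<and> x \<le> lp_hi \<delta> b" | (below) "x < lp_lo \<delta> b"
    | (above) "lp_hi \<delta> b < x" by linarith
  thus ?thesis
  proof cases
    case inside
    then show ?thesis
      unfolding quant_scalar_def
      using expectation_sq_error_stochastic_rounding[OF assms(1) lp_floor_gap[OF assms(1)]]
      by (simp add: Let_def)
  next
    case below
    hence "(lp_lo \<delta> b - s)\<^sup>2 \<le> (x - s)\<^sup>2" using assms by (intro power_mono_even) auto
    with below show ?thesis unfolding quant_scalar_def by (simp add: add_increasing2)
  next
    case above
    hence "(lp_hi \<delta> b - s)\<^sup>2 \<le> (x - s)\<^sup>2" using assms by (intro power_mono_even) auto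
    with above assms show ?thesis unfolding quant_scalar_def by (simp add: add_increasing2)
  qed
qed

lemma finite_set_pmf_quant_scalar: "finite (set_pmf (quant_scalar \<delta> b x))"
  unfolding quant_scalar_def by (auto simp: Let_def)

lemma expectation_quant_sum_components:
  fixes w :: "real ^ 'n" and g :: "'n \<Rightarrow> real \<Rightarrow> real"
  shows "measure_pmf.expectation (quant \<delta> b w) (\<lambda>v. \<Sum>j\<in>UNIV. g j (v $ j))
       = (\<Sum>j\<in>UNIV. measure_pmf.expectation (quant_scalar \<delta> b (w $ j)) (g j))"
proof -
  define P where "P = Pi_pmf (UNIV :: 'n set) 0 (\<lambda>j. quant_scalar \<delta> b (w $ j))"
  have "finite (set_pmf P)"
    unfolding P_def
    by (subst set_Pi_pmf) (auto intro!: finite_PiE_dflt finite_set_pmf_quant_scalar)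
  hence "measure_pmf.expectation P (\<lambda>f. \<Sum>j\<in>UNIV. g j (f j))
      = (\<Sum>j\<in>UNIV. measure_pmf.expectation P (\<lambda>f. g j (f j)))"
    by (intro Bochner_Integration.integral_sum) (simp add: integrable_measure_pmf_finite)
  also have "\<dots> = (\<Sum>j\<in>UNIV. measure_pmf.expectation (map_pmf (\<lambda>f. f j) P) (g j))"
    by simp
  also have "\<dots> = (\<Sum>j\<in>UNIV. measure_pmf.expectation (quant_scalar \<delta> b (w $ j)) (g j))"
    unfolding P_def by (subst Pi_pmf_component) auto
  finally show ?thesis unfolding quant_def P_def[symmetric] by simp
qed

lemma norm_vec_sq_eq_sum: "(norm x)\<^sup>2 = (\<Sum>j\<in>UNIV. (x $ j)\<^sup>2)" for x :: "real ^ 'n"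
  unfolding power2_norm_eq_inner by (simp add: inner_vec_def power2_eq_square)

theorem lemma1:
  fixes N :: nat and fi :: "nat \<Rightarrow> real ^ 'n \<Rightarrow> real"
    and gfi :: "nat \<Rightarrow> real ^ 'n \<Rightarrow> real ^ 'n"
    and \<mu> L \<delta> :: real and b :: nat and wstar w :: "real ^ 'n"
  assumes N_pos: "N \<ge> 1"
    and grad: "\<And>i x. i \<in> {1..N} \<Longrightarrow> (fi i has_derivative (\<lambda>h. gfi i x \<bullet> h)) (at x)"
    and mu_pos: "\<mu> > 0"
    and strongly_convex: "\<And>x y. (x - y) \<bullet> ((1 / real N) *\<^sub>R (\<Sum>i=1..N. gfi i x)
                                  - (1 / real N) *\<^sub>R (\<Sum>i=1..N. gfi i y)) \<ge> \<mu> * (norm (x - y))\<^sup>2"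
    and lipschitz: "\<And>i x y. i \<in> {1..N} \<Longrightarrow> norm (gfi i x - gfi i y) \<le> L * norm (x - y)"
    and minimizer: "\<And>v. (1 / real N) * (\<Sum>i=1..N. fi i wstar) \<le> (1 / real N) * (\<Sum>i=1..N. fi i v)"
    and delta_pos: "\<delta> > 0" and b_pos: "b \<ge> 1"
    and in_range: "\<And>j. lp_lo \<delta> b \<le> wstar $ j \<and> wstar $ j \<le> lp_hi \<delta> b"
  shows "measure_pmf.expectation (quant \<delta> b w) (\<lambda>v. (norm (v - wstar))\<^sup>2)
           \<le> (norm (w - wstar))\<^sup>2 + real CARD('n) * \<delta>\<^sup>2 / 4"
proof -
  have "measure_pmf.expectation (quant \<delta> b w) (\<lambda>v. (norm (v - wstar))\<^sup>2)
      = (\<Sum>j\<in>UNIV. measure_pmf.expectation (quant_scalar \<delta> b (w $ j)) (\<lambda>y. (y - wstar $ j)\<^sup>2))"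
    unfolding norm_vec_sq_eq_sum vector_minus_component
    by (rule expectation_quant_sum_components[where g = "\<lambda>j y. (y - wstar $ j)\<^sup>2"])
  also have "\<dots> \<le> (\<Sum>j\<in>UNIV. (w $ j - wstar $ j)\<^sup>2 + \<delta>\<^sup>2 / 4)"
    by (intro sum_mono expectation_sq_error_quant_scalar) (use delta_pos in_range in auto)
  also have "\<dots> = (norm (w - wstar))\<^sup>2 + real CARD('n) * \<delta>\<^sup>2 / 4"
    by (simp add: norm_vec_sq_eq_sum sum.distrib)
  finally show ?thesis .
qed

end
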